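(* Let $U$ be a $d\times d$ unitary matrix, $U_{ij}=\langle a_i|b_j\rangle$ for two orthonormal bases $\{|a_i\rangle\}$, $\{|b_j\rangle\}$ of $\mathbb{C}^d$, and let $p_i=\langle a_i|\rho|a_i\rangle$, $q_j=\langle b_j|\rho|b_j\rangle$ for a state $\rho$ on $\mathbb{C}^d$. For $k=1,\dots,d$ let $s_k=\max\{\|M\|: M \text{ a submatrix of } U \text{ with } \#\mathrm{cols}(M)+\#\mathrm{rows}(M)=k+1\}$, where $\|M\|$ is the largest singular value. Then $$(p_1,\dots,p_d,q_1,\dots,q_d)\prec(1,s_1,s_2-s_1,\dots,s_d-s_{d-1}).$$
   Context: For nonnegative vectors $x,y$ (padded with zeros to a common length if needed), $x\prec y$ means $\sum_{k=1}^n x^{\downarrow}_k\le\sum_{k=1}^n y^{\downarrow}_k$ for all $n$, with equality of total sums, where $x^{\downarrow}$ is $x$ sorted in decreasing order. A submatrix is obtained by selecting a nonempty set of rows and a nonempty set of columns. *)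

theory Defs
  imports Complex_Main
begin

text \<open>Vectors of C^d are functions nat => complex (only indices < d matter);
 d x d matrices are functions nat => nat => complex.\<close>

definition cinner :: "nat \<Rightarrow> (nat \<Rightarrow> complex) \<Rightarrow> (nat \<Rightarrow> complex) \<Rightarrow> complex" where
  "cinner d x y = (\<Sum>i<d. cnj (x i) * y i)"

definition mat_vec :: "nat \<Rightarrow> (nat \<Rightarrow> nat \<Rightarrow> complex) \<Rightarrow> (nat \<Rightarrow> complex) \<Rightarrow> (nat \<Rightarrow> complex)" where
  "mat_vec d A x = (\<lambda>i. \<Sum>j<d. A i j * x j)"

definition orthonormal_basis :: "nat \<Rightarrow> (nat \<Rightarrow> nat \<Rightarrow> complex) \<Rightarrow> bool" where
  "orthonormal_basis d a \<longleftrightarrow>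
     (\<forall>i<d. \<forall>j<d. cinner d (a i) (a j) = (if i = j then 1 else 0))"

definition unitary_mat :: "nat \<Rightarrow> (nat \<Rightarrow> nat \<Rightarrow> complex) \<Rightarrow> bool" where
  "unitary_mat d U \<longleftrightarrow>
     (\<forall>i<d. \<forall>j<d. (\<Sum>k<d. cnj (U k i) * U k j) = (if i = j then 1 else 0)) \<and>
     (\<forall>i<d. \<forall>j<d. (\<Sum>k<d. U i k * cnj (U j k)) = (if i = j then 1 else 0))"

definition density_matrix :: "nat \<Rightarrow> (nat \<Rightarrow> nat \<Rightarrow> complex) \<Rightarrow> bool" where
  "density_matrix d \<rho> \<longleftrightarrow>
     (\<forall>x. cinner d x (mat_vec d \<rho> x) \<in> \<real> \<and> Re (cinner d x (mat_vec d \<rho> x)) \<ge> 0) \<and>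
     (\<Sum>i<d. \<rho> i i) = 1"

text \<open>Largest singular value (= spectral/operator norm) of the submatrix of U with
  row index set I and column index set J.\<close>
definition submat_norm :: "(nat \<Rightarrow> nat \<Rightarrow> complex) \<Rightarrow> nat set \<Rightarrow> nat set \<Rightarrow> real" where
  "submat_norm U I J = Sup {sqrt (\<Sum>i\<in>I. (cmod (\<Sum>j\<in>J. U i j * x j))\<^sup>2) | x.
                              (\<Sum>j\<in>J. (cmod (x j))\<^sup>2) = 1}"

definition s_val :: "nat \<Rightarrow> (nat \<Rightarrow> nat \<Rightarrow> complex) \<Rightarrow> nat \<Rightarrow> real" where
  "s_val d U k = Max {submat_norm U I J | I J.
      I \<subseteq> {..<d} \<and> J \<subseteq> {..<d} \<and> I \<noteq> {} \<and> J \<noteq> {} \<and> card I + card J = k + 1}"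

definition top_sum :: "real list \<Rightarrow> nat \<Rightarrow> real" where
  "top_sum xs n = sum_list (take n (rev (sort xs)))"

definition pad :: "nat \<Rightarrow> real list \<Rightarrow> real list" where
  "pad m xs = xs @ replicate (m - length xs) 0"

definition majorized :: "real list \<Rightarrow> real list \<Rightarrow> bool" (infix "\<prec>" 50) where
  "xs \<prec> ys \<longleftrightarrow>
     (let m = max (length xs) (length ys) in
       (\<forall>n. top_sum (pad m xs) n \<le> top_sum (pad m ys) n) \<and> sum_list xs = sum_list ys)"

end

theory Submission
  imports Defs "Jordan_Normal_Form.Determinant" "HOL-Analysis.L2_Norm" "HOL-Combinatorics.Permutations"
begin

text \<open>Let \<open>P\<close> and \<open>Q\<close> project onto the spans of \<open>{a\<^sub>i | i \<in> I}\<close> and \<open>{b\<^sub>j | j \<in> J}\<close>.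
  Then \<open>\<Sum>\<^sub>I p\<^sub>i + \<Sum>\<^sub>J q\<^sub>j = tr (\<rho> (P + Q))\<close>, and \<open>P + Q \<le> 1 + s\<close> with \<open>s = \<parallel>U\<^sub>I\<^sub>J\<parallel> = \<parallel>P Q\<parallel>\<close>:
  for a vector \<open>x\<close> with \<open>u = P x\<close>, \<open>v = Q x\<close> one has \<open>\<parallel>u\<parallel>\<^sup>2 + \<parallel>v\<parallel>\<^sup>2 = \<langle>x, u + v\<rangle>\<close>, while
  \<open>|\<langle>u, v\<rangle>| \<le> s \<parallel>u\<parallel> \<parallel>v\<parallel>\<close> gives \<open>\<parallel>u + v\<parallel>\<^sup>2 \<le> (1 + s)(\<parallel>u\<parallel>\<^sup>2 + \<parallel>v\<parallel>\<^sup>2)\<close>, so Cauchy-Schwarz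
  yields \<open>\<parallel>u\<parallel>\<^sup>2 + \<parallel>v\<parallel>\<^sup>2 \<le> (1 + s) \<parallel>x\<parallel>\<^sup>2\<close>. Mixed states reduce to this case through a Gram
  (Cholesky) factorisation \<open>\<rho> = \<Sum>\<^sub>r c\<^sub>r c\<^sub>r\<^sup>*\<close>. Any \<open>k\<close> entries of \<open>(p, q)\<close> consist of \<open>|I|\<close> entries
  of \<open>p\<close> and \<open>|J|\<close> of \<open>q\<close> with \<open>|I| + |J| = k\<close>, so they sum to at most \<open>1 + s\<^sub>k\<^sub>-\<^sub>1\<close> (at most \<open>1\<close>
  if \<open>I\<close> or \<open>J\<close> is empty), the \<open>k\<close>-th partial sum of the majorant; both vectors sum to \<open>2\<close>
  because \<open>s\<^sub>d = 1\<close>.\<close>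

section \<open>Inner products and orthonormal bases\<close>

definition sq_norm_on :: "'a set \<Rightarrow> ('a \<Rightarrow> complex) \<Rightarrow> real" where
  "sq_norm_on S x = (\<Sum>k\<in>S. (cmod (x k))\<^sup>2)"

lemma sq_norm_on_nonneg: "0 \<le> sq_norm_on S x"
  by (simp add: sq_norm_on_def sum_nonneg)

lemma sum_cnj_mult_self: "(\<Sum>k\<in>S. cnj (x k) * x k) = of_real (sq_norm_on S x)"
  unfolding sq_norm_on_def of_real_sum
  by (rule sum.cong[OF refl], subst complex_norm_square, simp add: mult.commute)

lemma cinner_self: "cinner d x x = of_real (sq_norm_on {..<d} x)"
  unfolding cinner_def by (rule sum_cnj_mult_self)

lemma cinner_commute: "cinner d y x = cnj (cinner d x y)"
  by (simp add: cinner_def cnj_sum mult.commute)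

lemma cinner_cong:
  "(\<And>k. k < d \<Longrightarrow> x k = x' k) \<Longrightarrow> (\<And>k. k < d \<Longrightarrow> y k = y' k) \<Longrightarrow> cinner d x y = cinner d x' y'"
  unfolding cinner_def by (intro sum.cong) auto

lemma cinner_add_right: "cinner d x (\<lambda>k. y k + z k) = cinner d x y + cinner d x z"
  by (simp add: cinner_def distrib_left sum.distrib)

lemma cinner_add_left: "cinner d (\<lambda>k. y k + z k) x = cinner d y x + cinner d z x"
  by (simp add: cinner_def distrib_right sum.distrib)

lemma cinner_sum_right: "cinner d x (\<lambda>k. \<Sum>i\<in>I. f i * a i k) = (\<Sum>i\<in>I. f i * cinner d x (a i))"
  unfolding cinner_def
  by (simp add: sum_distrib_left sum_distrib_right mult_ac) (rule sum.swap)

lemma cinner_sum_sum: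
  "cinner d (\<lambda>k. \<Sum>i\<in>I. f i * a i k) (\<lambda>k. \<Sum>j\<in>J. g j * b j k)
    = (\<Sum>i\<in>I. \<Sum>j\<in>J. cnj (f i) * g j * cinner d (a i) (b j))"
proof -
  have "cinner d (\<lambda>k. \<Sum>i\<in>I. f i * a i k) (\<lambda>k. \<Sum>j\<in>J. g j * b j k)
      = cnj (\<Sum>i\<in>I. f i * cinner d (\<lambda>k. \<Sum>j\<in>J. g j * b j k) (a i))"
    by (subst cinner_commute) (simp only: cinner_sum_right)
  also have "\<dots> = (\<Sum>i\<in>I. cnj (f i) * cinner d (a i) (\<lambda>k. \<Sum>j\<in>J. g j * b j k))"
    by (simp add: cnj_sum cinner_commute[of d "a _"])
  also have "\<dots> = (\<Sum>i\<in>I. \<Sum>j\<in>J. cnj (f i) * g j * cinner d (a i) (b j))"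
    by (simp add: cinner_sum_right sum_distrib_left mult.assoc)
  finally show ?thesis .
qed

lemma cinner_coefficient_combination:
  "cinner d x (\<lambda>k. \<Sum>i\<in>I. cinner d (a i) x * a i k) = of_real (sq_norm_on I (\<lambda>i. cinner d (a i) x))"
  unfolding cinner_sum_right
  by (subst (2) cinner_commute) (simp add: sum_cnj_mult_self[symmetric] mult.commute)

lemma cmod_sum_cnj_mult_sq_le:
  assumes "finite S"
  shows "(cmod (\<Sum>k\<in>S. cnj (x k) * y k))\<^sup>2 \<le> sq_norm_on S x * sq_norm_on S y"
proof -
  have "cmod (\<Sum>k\<in>S. cnj (x k) * y k) \<le> (\<Sum>k\<in>S. \<bar>cmod (x k)\<bar> * \<bar>cmod (y k)\<bar>)"
    by (rule order_trans[OF norm_sum]) (simp add: norm_mult)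
  also have "\<dots> \<le> L2_set (\<lambda>k. cmod (x k)) S * L2_set (\<lambda>k. cmod (y k)) S"
    by (rule L2_set_mult_ineq)
  finally have "cmod (\<Sum>k\<in>S. cnj (x k) * y k) \<le> sqrt (sq_norm_on S x) * sqrt (sq_norm_on S y)"
    by (simp add: L2_set_def sq_norm_on_def)
  hence "(cmod (\<Sum>k\<in>S. cnj (x k) * y k))\<^sup>2 \<le> (sqrt (sq_norm_on S x) * sqrt (sq_norm_on S y))\<^sup>2"
    by (intro power_mono) auto
  thus ?thesis by (simp add: power_mult_distrib sq_norm_on_nonneg)
qed

lemma cinner_Cauchy_Schwarz: "(cmod (cinner d x y))\<^sup>2 \<le> sq_norm_on {..<d} x * sq_norm_on {..<d} y"
  unfolding cinner_def by (rule cmod_sum_cnj_mult_sq_le) simp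

lemma orthonormal_basis_sq_norm_combination:
  assumes "orthonormal_basis d a" "I \<subseteq> {..<d}"
  shows "sq_norm_on {..<d} (\<lambda>k. \<Sum>i\<in>I. f i * a i k) = sq_norm_on I f"
proof -
  have "finite I" using assms(2) finite_subset by blast
  have "of_real (sq_norm_on {..<d} (\<lambda>k. \<Sum>i\<in>I. f i * a i k))
      = (\<Sum>i\<in>I. \<Sum>j\<in>I. cnj (f i) * f j * cinner d (a i) (a j))"
    by (simp only: cinner_self[symmetric] cinner_sum_sum)
  also have "\<dots> = (\<Sum>i\<in>I. \<Sum>j\<in>I. if j = i then cnj (f i) * f j else 0)"
    using assms by (intro sum.cong refl) (auto simp: orthonormal_basis_def subset_eq)
  also have "\<dots> = of_real (sq_norm_on I f)"
    using \<open>finite I\<close> by (simp add: sum_cnj_mult_self)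
  finally show ?thesis by (simp only: of_real_eq_iff)
qed

text \<open>A one-sided inverse of a square matrix is two-sided.\<close>
lemma orthonormal_basis_transpose:
  assumes "orthonormal_basis d a" "k < d" "l < d"
  shows "(\<Sum>i<d. cnj (a i k) * a i l) = (if k = l then 1 else 0)"
proof -
  define A where "A = mat d d (\<lambda>(i,k). a i k)"
  define B where "B = mat d d (\<lambda>(k,i). cnj (a i k))"
  have AB: "A * B = 1\<^sub>m d"
  proof (rule eq_matI)
    fix i j assume ij: "i < dim_row (1\<^sub>m d)" "j < dim_col (1\<^sub>m d)"
    hence "(A * B) $$ (i,j) = cnj (cinner d (a i) (a j))"
      by (simp add: A_def B_def scalar_prod_def cinner_def atLeast0LessThan mult.commute)
    thus "(A * B) $$ (i,j) = 1\<^sub>m d $$ (i,j)" using assms(1) ij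
      by (simp add: orthonormal_basis_def)
  qed (auto simp: A_def B_def)
  have "B * A = 1\<^sub>m d"
    by (rule mat_mult_left_right_inverse[OF _ _ AB]) (auto simp: A_def B_def)
  hence "(B * A) $$ (k,l) = 1\<^sub>m d $$ (k,l)" by simp
  thus ?thesis using assms(2,3)
    by (simp add: A_def B_def scalar_prod_def atLeast0LessThan)
qed

lemma orthonormal_basis_expansion:
  assumes "orthonormal_basis d a" "l < d"
  shows "(\<Sum>i<d. cinner d (a i) x * a i l) = x l"
proof -
  have "(\<Sum>i<d. cinner d (a i) x * a i l) = (\<Sum>k<d. x k * (\<Sum>i<d. cnj (a i k) * a i l))"
    unfolding cinner_def sum_distrib_right sum_distrib_left
    by (subst sum.swap) (simp add: mult_ac)
  also have "\<dots> = x l"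
    using assms by (simp add: orthonormal_basis_transpose if_distrib[of "\<lambda>z. _ * z"] cong: if_cong)
  finally show ?thesis .
qed

lemma orthonormal_basis_Parseval:
  assumes "orthonormal_basis d a"
  shows "sq_norm_on {..<d} (\<lambda>i. cinner d (a i) x) = sq_norm_on {..<d} x"
proof -
  have "sq_norm_on {..<d} x = sq_norm_on {..<d} (\<lambda>k. \<Sum>i<d. cinner d (a i) x * a i k)"
    using assms by (simp add: sq_norm_on_def orthonormal_basis_expansion)
  also have "\<dots> = sq_norm_on {..<d} (\<lambda>i. cinner d (a i) x)"
    by (rule orthonormal_basis_sq_norm_combination[OF assms]) simp
  finally show ?thesis by simp
qed

lemma unitary_mat_columns_orthonormal: "unitary_mat d U \<Longrightarrow> orthonormal_basis d (\<lambda>j i. U i j)"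
  unfolding unitary_mat_def orthonormal_basis_def cinner_def by simp

section \<open>Positive semidefinite matrices\<close>

definition quad_form :: "nat \<Rightarrow> (nat \<Rightarrow> nat \<Rightarrow> complex) \<Rightarrow> (nat \<Rightarrow> complex) \<Rightarrow> complex" where
  "quad_form n G x = cinner n x (mat_vec n G x)"

definition psd_mat :: "nat \<Rightarrow> (nat \<Rightarrow> nat \<Rightarrow> complex) \<Rightarrow> bool" where
  "psd_mat n G \<longleftrightarrow> (\<forall>x. quad_form n G x \<in> \<real> \<and> 0 \<le> Re (quad_form n G x))"

lemma density_matrix_iff: "density_matrix d \<rho> \<longleftrightarrow> psd_mat d \<rho> \<and> (\<Sum>i<d. \<rho> i i) = 1"
  by (simp add: density_matrix_def psd_mat_def quad_form_def)

lemma quad_form_expand: "quad_form n G x = (\<Sum>k<n. \<Sum>l<n. cnj (x k) * G k l * x l)"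
  by (simp add: quad_form_def cinner_def mat_vec_def sum_distrib_left mult.assoc)

lemma quad_form_cong: "(\<And>k. k < n \<Longrightarrow> x k = y k) \<Longrightarrow> quad_form n G x = quad_form n G y"
  unfolding quad_form_expand by (intro sum.cong) auto

lemma quad_form_Suc:
  "quad_form (Suc n) G y = quad_form n G y + cnj (y n) * (\<Sum>l<n. G n l * y l)
     + (\<Sum>k<n. cnj (y k) * G k n) * y n + cnj (y n) * G n n * y n"
  unfolding quad_form_expand
  by (simp add: sum.distrib sum_distrib_left sum_distrib_right mult.assoc algebra_simps)

lemma quad_form_unit_vector:
  assumes "k < n"
  shows "quad_form n G (\<lambda>j. if j = k then 1 else 0) = G k k"
  using assms unfolding quad_form_expand
  by (simp add: if_distrib[of cnj] if_distrib[of "\<lambda>x. _ * x"] if_distrib[of "\<lambda>x. x * _"] cong: if_cong)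

lemma quad_form_two_unit_vectors:
  assumes "k < n" "l < n" "k \<noteq> l"
  shows "quad_form n G (\<lambda>j. (if j = k then 1 else 0) + (if j = l then z else 0))
     = G k k + G k l * z + cnj z * G l k + cnj z * G l l * z"
  using assms unfolding quad_form_expand
  by (simp add: distrib_left distrib_right sum.distrib if_distrib[of cnj]
      if_distrib[of "\<lambda>x. _ * x"] if_distrib[of "\<lambda>x. x * _"] cong: if_cong)

lemma psd_mat_hermitian:
  assumes "psd_mat n G" "k < n" "l < n"
  shows "G l k = cnj (G k l)"
proof -
  have real: "quad_form n G x \<in> \<real>" for x using assms(1) by (simp add: psd_mat_def)
  have diag: "G m m \<in> \<real>" if "m < n" for m
    using real[of "\<lambda>j. if j = m then 1 else 0"] by (simp add: quad_form_unit_vector[OF that])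
  show ?thesis
  proof (cases "k = l")
    case True
    thus ?thesis using diag[OF assms(2)] by (simp add: Reals_cnj_iff)
  next
    case False
    have "G k k + G k l * 1 + cnj 1 * G l k + cnj 1 * G l l * 1 \<in> \<real>"
      using real[of "\<lambda>j. (if j = k then 1 else 0) + (if j = l then 1 else 0)"]
      unfolding quad_form_two_unit_vectors[OF assms(2,3) False] .
    moreover have "G k k + G k l * \<i> + cnj \<i> * G l k + cnj \<i> * G l l * \<i> \<in> \<real>"
      using real[of "\<lambda>j. (if j = k then 1 else 0) + (if j = l then \<i> else 0)"]
      unfolding quad_form_two_unit_vectors[OF assms(2,3) False] .
    ultimately have "Im (G k l) + Im (G l k) = 0" "Re (G k l) - Re (G l k) = 0"
      using diag[OF assms(2)] diag[OF assms(3)] by (simp_all add: complex_is_Real_iff)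
    thus ?thesis by (simp add: complex_eq_iff)
  qed
qed

lemma psd_mat_zero_diag:
  assumes "psd_mat n G" "k < n" "m < n" "G m m = 0"
  shows "G k m = 0"
proof (rule ccontr)
  assume nz: "G k m \<noteq> 0"
  hence km: "k \<noteq> m" using assms(4) by auto
  text \<open>Testing the form on \<open>e\<^sub>k + z e\<^sub>m\<close> with \<open>G k m * z = -c\<close> gives \<open>G k k - 2 c \<ge> 0\<close>.\<close>
  define c where "c = \<bar>Re (G k k)\<bar> + 1"
  define z where "z = - of_real (c / (cmod (G k m))\<^sup>2) * cnj (G k m)"
  have Gz: "G k m * z = - of_real c"
    using nz by (simp add: z_def complex_norm_square[symmetric] field_simps)
  have "cnj z * G m k = cnj (G k m * z)"
    using psd_mat_hermitian[OF assms(1-3)] by simp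
  moreover have "0 \<le> Re (quad_form n G (\<lambda>j. (if j = k then 1 else 0) + (if j = m then z else 0)))"
    using assms(1) by (simp add: psd_mat_def)
  ultimately have "0 \<le> Re (G k k) - 2 * c"
    unfolding quad_form_two_unit_vectors[OF assms(2,3) km] using Gz assms(4) by simp
  thus False unfolding c_def by (smt (verit) abs_ge_self)
qed

lemma psd_mat_Suc_imp_psd_mat:
  assumes "psd_mat (Suc n) G"
  shows "psd_mat n G"
  unfolding psd_mat_def
proof
  fix x :: "nat \<Rightarrow> complex"
  define y where "y = (\<lambda>j. if j < n then x j else 0)"
  have "quad_form n G y = quad_form n G x" by (rule quad_form_cong) (simp add: y_def)
  hence "quad_form n G x = quad_form (Suc n) G y"
    unfolding quad_form_Suc by (simp add: y_def)
  thus "quad_form n G x \<in> \<real> \<and> 0 \<le> Re (quad_form n G x)"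
    using assms unfolding psd_mat_def by metis
qed

lemma quad_form_rank_one_update:
  "quad_form n (\<lambda>k l. G k l - v k * w l) x
     = quad_form n G x - (\<Sum>k<n. cnj (x k) * v k) * (\<Sum>l<n. w l * x l)"
  unfolding quad_form_expand
  by (simp add: algebra_simps sum_subtractf sum_distrib_left sum_distrib_right)

lemma psd_mat_Schur_complement:
  assumes psd: "psd_mat (Suc n) G" and nz: "G n n \<noteq> 0"
  shows "psd_mat n (\<lambda>k l. G k l - G k n * (G n l / G n n))"
  unfolding psd_mat_def
proof
  fix x :: "nat \<Rightarrow> complex"
  define \<gamma> where "\<gamma> = G n n"
  define \<beta> where "\<beta> = (\<Sum>l<n. G n l * x l)"
  text \<open>The Schur complement form at \<open>x\<close> is the full form at \<open>x\<close> extended by \<open>-\<beta>/\<gamma>\<close>.\<close>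
  define y where "y = (\<lambda>j. if j < n then x j else - \<beta> / \<gamma>)"
  have herm: "G k n = cnj (G n k)" if "k < n" for k
    using psd_mat_hermitian[OF psd, of n k] that by simp
  have \<gamma>_real: "cnj \<gamma> = \<gamma>"
    using psd_mat_hermitian[OF psd, of n n] by (simp add: \<gamma>_def)
  have col: "(\<Sum>k<n. cnj (x k) * G k n) = cnj \<beta>"
    unfolding \<beta>_def cnj_sum by (rule sum.cong) (simp_all add: herm mult.commute)
  have "quad_form n (\<lambda>k l. G k l - G k n * (G n l / G n n)) x = quad_form n G x - cnj \<beta> * \<beta> / \<gamma>"
    unfolding quad_form_rank_one_update col
    by (simp add: \<beta>_def \<gamma>_def sum_divide_distrib[symmetric] times_divide_eq_left)
  also have "\<dots> = quad_form (Suc n) G y"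
  proof -
    have "quad_form n G y = quad_form n G x" by (rule quad_form_cong) (simp add: y_def)
    moreover have "(\<Sum>l<n. G n l * y l) = \<beta>" unfolding \<beta>_def by (rule sum.cong) (simp_all add: y_def)
    moreover have "(\<Sum>k<n. cnj (y k) * G k n) = cnj \<beta>" unfolding col[symmetric] by (rule sum.cong) (simp_all add: y_def)
    ultimately show ?thesis
      unfolding quad_form_Suc using nz \<gamma>_real
      by (simp add: y_def \<gamma>_def[symmetric])
  qed
  finally show "quad_form n (\<lambda>k l. G k l - G k n * (G n l / G n n)) x \<in> \<real> \<and>
      0 \<le> Re (quad_form n (\<lambda>k l. G k l - G k n * (G n l / G n n)) x)"
    using psd unfolding psd_mat_def by metis
qed

lemma psd_mat_cong:
  assumes "\<And>k l. k < n \<Longrightarrow> l < n \<Longrightarrow> G k l = H k l"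
  shows "psd_mat n G = psd_mat n H"
proof -
  have "quad_form n G = quad_form n H"
    using assms by (intro ext) (simp add: quad_form_expand)
  thus ?thesis by (simp add: psd_mat_def)
qed

lemma psd_mat_deflate:
  assumes psd: "psd_mat (Suc n) G"
  obtains v where "psd_mat n (\<lambda>k l. G k l - v k * cnj (v l))"
    and "\<And>k l. k < Suc n \<Longrightarrow> l < Suc n \<Longrightarrow> k = n \<or> l = n \<Longrightarrow> G k l = v k * cnj (v l)"
proof (cases "G n n = 0")
  case True
  show ?thesis
  proof (rule that[of "\<lambda>_. 0"])
    show "psd_mat n (\<lambda>k l. G k l - 0 * cnj 0)"
      using psd_mat_Suc_imp_psd_mat[OF psd] by simp
    fix k l assume kl: "k < Suc n" "l < Suc n" "k = n \<or> l = n"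
    have col: "G j n = 0" if "j < Suc n" for j
      using psd_mat_zero_diag[OF psd that lessI True] .
    have "G n l = 0"
      using psd_mat_hermitian[OF psd kl(2) lessI] col[OF kl(2)] by simp
    thus "G k l = 0 * cnj 0" using kl col by auto
  qed
next
  case False
  define \<gamma> where "\<gamma> = G n n"
  have herm: "G l k = cnj (G k l)" if "k < Suc n" "l < Suc n" for k l
    using psd_mat_hermitian[OF psd that] .
  have "G n n \<in> \<real>"
    using herm[of n n] by (simp add: Reals_cnj_iff)
  then obtain g where g: "\<gamma> = of_real g" unfolding \<gamma>_def by (auto elim: Reals_cases)
  have "0 \<le> Re (quad_form (Suc n) G (\<lambda>j. if j = n then 1 else 0))"
    using psd by (simp add: psd_mat_def)
  hence "0 < g" using False g by (simp add: quad_form_unit_vector \<gamma>_def)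
  define v where "v = (\<lambda>k. G k n / of_real (sqrt g))"
  have v: "v k * cnj (v l) = G k n * (G n l / \<gamma>)" if "l < Suc n" for k l
  proof -
    have "of_real (sqrt g) * of_real (sqrt g) = \<gamma>"
      using \<open>0 < g\<close> g by (simp flip: of_real_mult)
    thus ?thesis using herm[OF that, of n] by (simp add: v_def)
  qed
  show ?thesis
  proof (rule that[of v])
    show "psd_mat n (\<lambda>k l. G k l - v k * cnj (v l))"
      using psd_mat_Schur_complement[OF psd False]
      by (subst psd_mat_cong[where H = "\<lambda>k l. G k l - G k n * (G n l / G n n)"]) (simp_all add: v \<gamma>_def)
    fix k l assume "k < Suc n" "l < Suc n" "k = n \<or> l = n"
    thus "G k l = v k * cnj (v l)" using False by (auto simp: v \<gamma>_def)
  qed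
qed

lemma psd_mat_Gram:
  "psd_mat n G \<Longrightarrow> \<exists>c. \<forall>k<n. \<forall>l<n. G k l = (\<Sum>r<n. c r k * cnj (c r l))"
proof (induction n arbitrary: G)
  case 0
  show ?case by simp
next
  case (Suc n)
  obtain v where psd': "psd_mat n (\<lambda>k l. G k l - v k * cnj (v l))"
    and border: "\<And>k l. k < Suc n \<Longrightarrow> l < Suc n \<Longrightarrow> k = n \<or> l = n \<Longrightarrow> G k l = v k * cnj (v l)"
    using psd_mat_deflate[OF Suc.prems] by blast
  obtain c' where c': "\<forall>k<n. \<forall>l<n. G k l - v k * cnj (v l) = (\<Sum>r<n. c' r k * cnj (c' r l))"
    using Suc.IH[OF psd'] by blast
  define c where "c = (\<lambda>r k. if r < n then (if k < n then c' r k else 0) else v k)"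
  have "G k l = (\<Sum>r<Suc n. c r k * cnj (c r l))" if "k < Suc n" "l < Suc n" for k l
  proof (cases "k < n \<and> l < n")
    case True
    thus ?thesis using c' by (simp add: c_def algebra_simps)
  next
    case False
    hence "(\<Sum>r<n. c r k * cnj (c r l)) = 0" by (intro sum.neutral) (auto simp: c_def)
    moreover have "G k l = v k * cnj (v l)" using False that by (intro border) auto
    ultimately show ?thesis by (simp add: c_def)
  qed
  thus ?case by blast
qed

lemma quad_form_Gram:
  assumes "\<forall>k<d. \<forall>l<d. G k l = (\<Sum>r<m. c r k * cnj (c r l))"
  shows "quad_form d G y = of_real (\<Sum>r<m. (cmod (cinner d y (c r)))\<^sup>2)"
proof -
  have "mat_vec d G y k = (\<Sum>r<m. cinner d (c r) y * c r k)" if "k < d" for k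
  proof -
    have "mat_vec d G y k = (\<Sum>l<d. \<Sum>r<m. c r k * cnj (c r l) * y l)"
      unfolding mat_vec_def using assms that by (simp add: sum_distrib_right)
    also have "\<dots> = (\<Sum>r<m. cinner d (c r) y * c r k)"
      by (subst sum.swap) (simp add: cinner_def sum_distrib_left sum_distrib_right mult_ac)
    finally show ?thesis .
  qed
  hence "quad_form d G y = cinner d y (\<lambda>k. \<Sum>r<m. cinner d (c r) y * c r k)"
    unfolding quad_form_def by (intro cinner_cong) simp_all
  also have "\<dots> = (\<Sum>r<m. of_real ((cmod (cinner d y (c r)))\<^sup>2))"
    unfolding cinner_sum_right
    by (rule sum.cong[OF refl], subst complex_norm_square) (simp add: cinner_commute[of d "c _"] mult.commute)
  finally show ?thesis by simp
qed

lemma trace_Gram: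
  assumes "\<forall>k<d. \<forall>l<d. G k l = (\<Sum>r<m. c r k * cnj (c r l))"
  shows "(\<Sum>k<d. G k k) = of_real (\<Sum>r<m. sq_norm_on {..<d} (c r))"
proof -
  have "(\<Sum>k<d. G k k) = (\<Sum>r<m. \<Sum>k<d. cnj (c r k) * c r k)"
    using assms by (subst sum.swap) (simp add: mult.commute)
  thus ?thesis by (simp add: sum_cnj_mult_self)
qed

lemma density_matrix_Gram:
  assumes "density_matrix d \<rho>"
  obtains c where "\<And>y. quad_form d \<rho> y = of_real (\<Sum>r<d. (cmod (cinner d y (c r)))\<^sup>2)"
    and "(\<Sum>r<d. sq_norm_on {..<d} (c r)) = 1"
proof -
  have "psd_mat d \<rho>" using assms by (simp add: density_matrix_iff)
  then obtain c where c: "\<forall>k<d. \<forall>l<d. \<rho> k l = (\<Sum>r<d. c r k * cnj (c r l))"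
    using psd_mat_Gram by blast
  moreover have "(\<Sum>r<d. sq_norm_on {..<d} (c r)) = 1"
    using trace_Gram[OF c] assms unfolding density_matrix_iff by (metis of_real_eq_1_iff)
  ultimately show ?thesis using that quad_form_Gram by blast
qed

section \<open>Norms of submatrices of a unitary matrix\<close>

lemma submat_mult_sq_le:
  assumes U: "unitary_mat d U" and I: "I \<subseteq> {..<d}" and J: "J \<subseteq> {..<d}"
  shows "(\<Sum>i\<in>I. (cmod (\<Sum>j\<in>J. U i j * x j))\<^sup>2) \<le> sq_norm_on J x"
proof -
  have "(\<Sum>i\<in>I. (cmod (\<Sum>j\<in>J. U i j * x j))\<^sup>2) \<le> (\<Sum>i<d. (cmod (\<Sum>j\<in>J. U i j * x j))\<^sup>2)"
    using I by (intro sum_mono2) auto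
  also have "\<dots> = sq_norm_on {..<d} (\<lambda>i. \<Sum>j\<in>J. x j * U i j)"
    by (simp add: sq_norm_on_def mult.commute)
  also have "\<dots> = sq_norm_on J x"
    by (rule orthonormal_basis_sq_norm_combination[OF unitary_mat_columns_orthonormal[OF U] J])
  finally show ?thesis .
qed

lemma submat_mult_unit_vector_le_1:
  assumes "unitary_mat d U" "I \<subseteq> {..<d}" "J \<subseteq> {..<d}" "sq_norm_on J x = 1"
  shows "sqrt (\<Sum>i\<in>I. (cmod (\<Sum>j\<in>J. U i j * x j))\<^sup>2) \<le> 1"
  using submat_mult_sq_le[OF assms(1-3), of x] assms(4) by simp

lemma exists_unit_vector:
  assumes "finite J" "J \<noteq> {}"
  obtains x where "sq_norm_on J x = 1"
proof -
  obtain j where "j \<in> J" using assms(2) by blast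
  hence "sq_norm_on J (\<lambda>i. if i = j then 1 else 0) = 1"
    using assms(1) by (simp add: sq_norm_on_def if_distrib[of "\<lambda>z. (cmod z)\<^sup>2"] cong: if_cong)
  thus ?thesis using that by blast
qed

lemma submat_norm_ge:
  assumes U: "unitary_mat d U" and I: "I \<subseteq> {..<d}" and J: "J \<subseteq> {..<d}"
    and x: "sq_norm_on J x = 1"
  shows "sqrt (\<Sum>i\<in>I. (cmod (\<Sum>j\<in>J. U i j * x j))\<^sup>2) \<le> submat_norm U I J"
  unfolding submat_norm_def
proof (rule cSup_upper)
  show "bdd_above {sqrt (\<Sum>i\<in>I. (cmod (\<Sum>j\<in>J. U i j * y j))\<^sup>2) | y. (\<Sum>j\<in>J. (cmod (y j))\<^sup>2) = 1}"
    using submat_mult_unit_vector_le_1[OF U I J]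
    by (intro bdd_aboveI[where M = 1]) (auto simp: sq_norm_on_def)
qed (use x in \<open>auto simp: sq_norm_on_def\<close>)

lemma submat_norm_nonneg:
  assumes "unitary_mat d U" "I \<subseteq> {..<d}" "J \<subseteq> {..<d}" "J \<noteq> {}"
  shows "0 \<le> submat_norm U I J"
proof -
  obtain x where "sq_norm_on J x = 1"
    using exists_unit_vector finite_subset[OF assms(3)] assms(4) by blast
  from submat_norm_ge[OF assms(1-3) this] show ?thesis
    by (rule order_trans[rotated]) (simp add: sum_nonneg)
qed

lemma submat_norm_le_1:
  assumes U: "unitary_mat d U" and I: "I \<subseteq> {..<d}" and J: "J \<subseteq> {..<d}" "J \<noteq> {}"
  shows "submat_norm U I J \<le> 1"
  unfolding submat_norm_def
proof (rule cSup_least)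
  obtain x where "sq_norm_on J x = 1"
    using exists_unit_vector finite_subset[OF J(1)] J(2) by blast
  hence "sqrt (\<Sum>i\<in>I. (cmod (\<Sum>j\<in>J. U i j * x j))\<^sup>2)
      \<in> {sqrt (\<Sum>i\<in>I. (cmod (\<Sum>j\<in>J. U i j * y j))\<^sup>2) | y. (\<Sum>j\<in>J. (cmod (y j))\<^sup>2) = 1}"
    by (auto simp: sq_norm_on_def)
  thus "{sqrt (\<Sum>i\<in>I. (cmod (\<Sum>j\<in>J. U i j * y j))\<^sup>2) | y. (\<Sum>j\<in>J. (cmod (y j))\<^sup>2) = 1} \<noteq> {}"
    by blast
qed (use submat_mult_unit_vector_le_1[OF U I J(1)] in \<open>auto simp: sq_norm_on_def\<close>)

lemma submat_mult_sq_le_submat_norm: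
  assumes U: "unitary_mat d U" and I: "I \<subseteq> {..<d}" and J: "J \<subseteq> {..<d}"
  shows "(\<Sum>i\<in>I. (cmod (\<Sum>j\<in>J. U i j * y j))\<^sup>2) \<le> (submat_norm U I J)\<^sup>2 * sq_norm_on J y"
proof (cases "sq_norm_on J y = 0")
  case True
  have "finite J" using J finite_subset by blast
  hence "\<forall>j\<in>J. y j = 0" using True by (simp add: sq_norm_on_def sum_nonneg_eq_0_iff)
  thus ?thesis using True by simp
next
  case False
  define n where "n = sq_norm_on J y"
  have n: "0 < n" using False sq_norm_on_nonneg[of J y] unfolding n_def by linarith
  define x where "x = (\<lambda>j. y j / of_real (sqrt n))"
  have "sq_norm_on J x = 1"
    using n unfolding sq_norm_on_def x_def
    by (simp add: norm_divide power_divide sum_divide_distrib[symmetric] n_def sq_norm_on_def)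
  moreover have "(\<Sum>i\<in>I. (cmod (\<Sum>j\<in>J. U i j * x j))\<^sup>2) = (\<Sum>i\<in>I. (cmod (\<Sum>j\<in>J. U i j * y j))\<^sup>2) / n"
    using n by (simp add: x_def sum_divide_distrib[symmetric] norm_divide power_divide mult.assoc)
  ultimately have "sqrt ((\<Sum>i\<in>I. (cmod (\<Sum>j\<in>J. U i j * y j))\<^sup>2) / n) \<le> submat_norm U I J"
    using submat_norm_ge[OF U I J, of x] by simp
  hence "(\<Sum>i\<in>I. (cmod (\<Sum>j\<in>J. U i j * y j))\<^sup>2) / n \<le> (submat_norm U I J)\<^sup>2"
    by (rule sqrt_le_D)
  thus ?thesis using n by (simp add: n_def pos_divide_le_eq)
qed

lemma finite_s_val_set:
  "finite {submat_norm U I J | I J.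
      I \<subseteq> {..<d} \<and> J \<subseteq> {..<d} \<and> I \<noteq> {} \<and> J \<noteq> {} \<and> card I + card J = k + 1}"
proof (rule finite_subset)
  show "finite ((\<lambda>(I, J). submat_norm U I J) ` (Pow {..<d} \<times> Pow {..<d}))" by simp
qed auto

lemma submat_norm_le_s_val:
  assumes "I \<subseteq> {..<d}" "J \<subseteq> {..<d}" "I \<noteq> {}" "J \<noteq> {}" "card I + card J = k + 1"
  shows "submat_norm U I J \<le> s_val d U k"
  unfolding s_val_def by (rule Max_ge[OF finite_s_val_set]) (use assms in blast)

lemma submat_norm_column_le_s_val:
  assumes "1 \<le> k" "k \<le> d"
  shows "submat_norm U {..<k} {0} \<le> s_val d U k"
  using assms by (intro submat_norm_le_s_val) (auto simp: lessThan_empty_iff)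

lemma s_val_nonneg:
  assumes "unitary_mat d U" "1 \<le> k" "k \<le> d"
  shows "0 \<le> s_val d U k"
proof -
  have "0 \<le> submat_norm U {..<k} {0}"
    by (rule submat_norm_nonneg[OF assms(1)]) (use assms in auto)
  thus ?thesis using submat_norm_column_le_s_val[OF assms(2,3), of U] by linarith
qed

lemma s_val_dim:
  assumes U: "unitary_mat d U" and d: "1 \<le> d"
  shows "s_val d U d = 1"
proof (rule antisym)
  have "{..<d} \<noteq> {}" "{0} \<subseteq> {..<d}" "card {..<d} + card {0::nat} = d + 1"
    using d by (auto simp: lessThan_empty_iff)
  thus "s_val d U d \<le> 1"
    unfolding s_val_def
    by (intro Max.boundedI[OF finite_s_val_set]) (blast, auto intro: submat_norm_le_1[OF U])
  have "of_real (sq_norm_on {..<d} (\<lambda>i. U i 0)) = (\<Sum>i<d. cnj (U i 0) * U i 0)"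
    by (simp add: sum_cnj_mult_self)
  also have "\<dots> = 1" using U d by (simp add: unitary_mat_def)
  finally have "sq_norm_on {..<d} (\<lambda>i. U i 0) = 1"
    by (simp only: of_real_eq_1_iff)
  hence "1 \<le> submat_norm U {..<d} {0}"
    using submat_norm_ge[OF U _ _, of "{..<d}" "{0}" "\<lambda>j. if j = 0 then 1 else 0"] d
    by (simp add: sq_norm_on_def)
  also have "\<dots> \<le> s_val d U d" by (rule submat_norm_column_le_s_val[OF d order_refl])
  finally show "1 \<le> s_val d U d" .
qed

section \<open>Probabilities of two bases\<close>

lemma cmod_cinner_combinations_le:
  assumes U: "\<forall>i<d. \<forall>j<d. U i j = cinner d (a i) (b j)"
    and I: "I \<subseteq> {..<d}" and J: "J \<subseteq> {..<d}" and s: "0 \<le> s"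
    and bound: "\<And>y. (\<Sum>i\<in>I. (cmod (\<Sum>j\<in>J. U i j * y j))\<^sup>2) \<le> s\<^sup>2 * sq_norm_on J y"
  shows "2 * cmod (cinner d (\<lambda>k. \<Sum>i\<in>I. \<alpha> i * a i k) (\<lambda>k. \<Sum>j\<in>J. \<beta> j * b j k))
           \<le> s * (sq_norm_on I \<alpha> + sq_norm_on J \<beta>)"
proof -
  define A where "A = sq_norm_on I \<alpha>"
  define B where "B = sq_norm_on J \<beta>"
  define z where "z = cinner d (\<lambda>k. \<Sum>i\<in>I. \<alpha> i * a i k) (\<lambda>k. \<Sum>j\<in>J. \<beta> j * b j k)"
  have A: "0 \<le> A" and B: "0 \<le> B" by (simp_all add: A_def B_def sq_norm_on_nonneg)
  have "z = (\<Sum>i\<in>I. cnj (\<alpha> i) * (\<Sum>j\<in>J. U i j * \<beta> j))"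
    unfolding z_def cinner_sum_sum sum_distrib_left
    using I J U by (intro sum.cong refl) (auto simp: subset_eq mult_ac)
  hence "(cmod z)\<^sup>2 \<le> A * sq_norm_on I (\<lambda>i. \<Sum>j\<in>J. U i j * \<beta> j)"
    unfolding A_def using cmod_sum_cnj_mult_sq_le finite_subset[OF I] by simp
  also have "\<dots> \<le> A * (s\<^sup>2 * B)"
    using bound[of \<beta>] by (intro mult_left_mono[OF _ A]) (simp add: B_def sq_norm_on_def)
  finally have "(2 * cmod z)\<^sup>2 \<le> s\<^sup>2 * (4 * A * B)"
    by (simp add: power2_eq_square mult_ac)
  also have "\<dots> \<le> s\<^sup>2 * (A + B)\<^sup>2"
    using zero_le_power2[of "A - B"]
    by (intro mult_left_mono) (simp_all add: power2_eq_square algebra_simps)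
  also have "\<dots> = (s * (A + B))\<^sup>2" by (simp add: power_mult_distrib)
  finally show ?thesis
    unfolding z_def A_def B_def by (rule power2_le_imp_le) (use s A B in \<open>simp add: A_def B_def\<close>)
qed

lemma coefficient_mass_two_bases_le:
  assumes a: "orthonormal_basis d a" and b: "orthonormal_basis d b"
    and U: "\<forall>i<d. \<forall>j<d. U i j = cinner d (a i) (b j)"
    and I: "I \<subseteq> {..<d}" and J: "J \<subseteq> {..<d}" and s: "0 \<le> s"
    and bound: "\<And>y. (\<Sum>i\<in>I. (cmod (\<Sum>j\<in>J. U i j * y j))\<^sup>2) \<le> s\<^sup>2 * sq_norm_on J y"
  shows "sq_norm_on I (\<lambda>i. cinner d (a i) x) + sq_norm_on J (\<lambda>j. cinner d (b j) x)
           \<le> (1 + s) * sq_norm_on {..<d} x"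
proof -
  define \<alpha> where "\<alpha> = (\<lambda>i. cinner d (a i) x)"
  define \<beta> where "\<beta> = (\<lambda>j. cinner d (b j) x)"
  define A where "A = sq_norm_on I \<alpha>"
  define B where "B = sq_norm_on J \<beta>"
  text \<open>\<open>u\<close> and \<open>v\<close> are the projections of \<open>x\<close> onto the spans of \<open>a ` I\<close> and \<open>b ` J\<close>.\<close>
  define u where "u = (\<lambda>k. \<Sum>i\<in>I. \<alpha> i * a i k)"
  define v where "v = (\<lambda>k. \<Sum>j\<in>J. \<beta> j * b j k)"
  define z where "z = cinner d u v"
  have A: "0 \<le> A" and B: "0 \<le> B" by (simp_all add: A_def B_def sq_norm_on_nonneg)
  have z_le: "2 * cmod z \<le> s * (A + B)"
    unfolding z_def u_def v_def A_def B_def by (rule cmod_cinner_combinations_le[OF U I J s bound])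
  have uu: "cinner d u u = of_real A"
    unfolding cinner_self u_def A_def orthonormal_basis_sq_norm_combination[OF a I] ..
  have vv: "cinner d v v = of_real B"
    unfolding cinner_self v_def B_def orthonormal_basis_sq_norm_combination[OF b J] ..
  have "of_real (sq_norm_on {..<d} (\<lambda>k. u k + v k)) = of_real A + of_real B + (z + cnj z)"
    unfolding cinner_self[symmetric] cinner_add_left cinner_add_right uu vv
      cinner_commute[of d v u] z_def[symmetric] by simp
  hence "sq_norm_on {..<d} (\<lambda>k. u k + v k) = A + B + 2 * Re z"
    by (simp only: complex_add_cnj of_real_eq_iff flip: of_real_add)
  hence W: "sq_norm_on {..<d} (\<lambda>k. u k + v k) \<le> (1 + s) * (A + B)"
    using z_le complex_Re_le_cmod[of z] by (simp add: algebra_simps)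
  have "cinner d x (\<lambda>k. u k + v k) = of_real (A + B)"
    unfolding cinner_add_right u_def v_def \<alpha>_def \<beta>_def A_def B_def
    by (simp add: cinner_coefficient_combination)
  hence "(A + B)\<^sup>2 \<le> sq_norm_on {..<d} x * sq_norm_on {..<d} (\<lambda>k. u k + v k)"
    using cinner_Cauchy_Schwarz[of d x "\<lambda>k. u k + v k"] A B by (simp del: of_real_add)
  also have "\<dots> \<le> sq_norm_on {..<d} x * ((1 + s) * (A + B))"
    by (rule mult_left_mono[OF W sq_norm_on_nonneg])
  finally have "(A + B) * (A + B) \<le> (A + B) * ((1 + s) * sq_norm_on {..<d} x)"
    by (simp add: power2_eq_square mult_ac)
  hence "A + B \<le> (1 + s) * sq_norm_on {..<d} x"
    using A B s sq_norm_on_nonneg[of "{..<d}" x]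
    by (cases "A + B = 0") (simp_all add: mult_le_cancel_left)
  thus ?thesis unfolding A_def B_def \<alpha>_def \<beta>_def .
qed

lemma sum_Re_quad_form_Gram:
  assumes "\<And>y. quad_form d \<rho> y = of_real (\<Sum>r<m. (cmod (cinner d y (c r)))\<^sup>2)"
  shows "(\<Sum>i\<in>I. Re (quad_form d \<rho> (a i))) = (\<Sum>r<m. sq_norm_on I (\<lambda>i. cinner d (a i) (c r)))"
  unfolding assms sq_norm_on_def by (simp add: sum.swap[of _ I])

lemma sum_basis_probabilities:
  assumes "orthonormal_basis d a" "density_matrix d \<rho>"
  shows "(\<Sum>i<d. Re (quad_form d \<rho> (a i))) = 1"
proof -
  obtain c where c: "\<And>y. quad_form d \<rho> y = of_real (\<Sum>r<d. (cmod (cinner d y (c r)))\<^sup>2)"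
    and tr: "(\<Sum>r<d. sq_norm_on {..<d} (c r)) = 1"
    using density_matrix_Gram[OF assms(2)] by blast
  show ?thesis
    unfolding sum_Re_quad_form_Gram[OF c] orthonormal_basis_Parseval[OF assms(1)] by (rule tr)
qed

lemma sum_basis_probabilities_le_1:
  assumes "orthonormal_basis d a" "density_matrix d \<rho>" "I \<subseteq> {..<d}"
  shows "(\<Sum>i\<in>I. Re (quad_form d \<rho> (a i))) \<le> 1"
proof -
  have "(\<Sum>i\<in>I. Re (quad_form d \<rho> (a i))) \<le> (\<Sum>i<d. Re (quad_form d \<rho> (a i)))"
    using assms(2,3) by (intro sum_mono2) (auto simp: density_matrix_iff psd_mat_def)
  thus ?thesis using sum_basis_probabilities[OF assms(1,2)] by simp
qed

lemma sum_basis_probabilities_le_submat_norm: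
  assumes a: "orthonormal_basis d a" and b: "orthonormal_basis d b" and U: "unitary_mat d U"
    and Uab: "\<forall>i<d. \<forall>j<d. U i j = cinner d (a i) (b j)" and \<rho>: "density_matrix d \<rho>"
    and I: "I \<subseteq> {..<d}" and J: "J \<subseteq> {..<d}" "J \<noteq> {}"
  shows "(\<Sum>i\<in>I. Re (quad_form d \<rho> (a i))) + (\<Sum>j\<in>J. Re (quad_form d \<rho> (b j)))
           \<le> 1 + submat_norm U I J"
proof -
  obtain c where c: "\<And>y. quad_form d \<rho> y = of_real (\<Sum>r<d. (cmod (cinner d y (c r)))\<^sup>2)"
    and tr: "(\<Sum>r<d. sq_norm_on {..<d} (c r)) = 1"
    using density_matrix_Gram[OF \<rho>] by blast
  define s where "s = submat_norm U I J"
  have "(\<Sum>i\<in>I. Re (quad_form d \<rho> (a i))) + (\<Sum>j\<in>J. Re (quad_form d \<rho> (b j)))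
      = (\<Sum>r<d. sq_norm_on I (\<lambda>i. cinner d (a i) (c r)) + sq_norm_on J (\<lambda>j. cinner d (b j) (c r)))"
    unfolding sum_Re_quad_form_Gram[OF c] by (simp add: sum.distrib)
  also have "\<dots> \<le> (\<Sum>r<d. (1 + s) * sq_norm_on {..<d} (c r))"
    unfolding s_def
    by (intro sum_mono coefficient_mass_two_bases_le[OF a b Uab I J(1)]
        submat_norm_nonneg[OF U I J] submat_mult_sq_le_submat_norm[OF U I J(1)])
  also have "\<dots> = 1 + s" by (simp add: tr flip: sum_distrib_left)
  finally show ?thesis unfolding s_def .
qed

section \<open>Majorization\<close>

lemma sum_le_sum_prefix_if_descending:
  fixes zs :: "real list"
  assumes desc: "\<And>i j. i \<le> j \<Longrightarrow> j < length zs \<Longrightarrow> zs ! j \<le> zs ! i"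
    and T: "T \<subseteq> {..<length zs}"
  shows "(\<Sum>k\<in>T. zs ! k) \<le> (\<Sum>k<card T. zs ! k)"
proof -
  text \<open>Every index of \<open>T\<close> beyond the prefix is traded for a missing prefix index,
    and \<open>zs ! card T\<close> separates the two kinds of entries.\<close>
  define m where "m = card T"
  define A where "A = T - {..<m}"
  define B where "B = {..<m} - T"
  define C where "C = T \<inter> {..<m}"
  have fin: "finite A" "finite B" "finite C"
    using T finite_subset by (auto simp: A_def B_def C_def)
  have T_split: "T = C \<union> A" "C \<inter> A = {}" and P_split: "{..<m} = C \<union> B" "C \<inter> B = {}"
    by (auto simp: A_def B_def C_def)
  have "card C + card A = card C + card B"
    using card_Un_disjoint[OF fin(3,1) T_split(2)] card_Un_disjoint[OF fin(3,2) P_split(2)]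
    by (simp flip: T_split(1) P_split(1) add: m_def)
  hence card: "card A = card B" by simp
  have "(\<Sum>k\<in>A. zs ! k) \<le> (\<Sum>k\<in>B. zs ! k)"
  proof (cases "A = {}")
    case True
    thus ?thesis using card fin by simp
  next
    case False
    hence m: "m < length zs" using T by (auto simp: A_def)
    have "(\<Sum>k\<in>A. zs ! k) \<le> (\<Sum>k\<in>A. zs ! m)"
      by (rule sum_mono) (use T desc in \<open>auto simp: A_def\<close>)
    also have "\<dots> = (\<Sum>k\<in>B. zs ! m)" using card by simp
    also have "\<dots> \<le> (\<Sum>k\<in>B. zs ! k)"
      by (rule sum_mono) (use m desc in \<open>auto simp: B_def\<close>)
    finally show ?thesis .
  qed
  thus ?thesis
    unfolding m_def[symmetric]
    by (simp add: T_split(1) P_split(1) sum.union_disjoint fin T_split(2) P_split(2))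
qed

lemma rev_sort_permutation:
  fixes ys :: "real list"
  obtains p where "p permutes {..<length ys}" "\<And>k. k < length ys \<Longrightarrow> rev (sort ys) ! k = ys ! p k"
proof -
  have "mset (rev (sort ys)) = mset ys" by simp
  then obtain p where p: "p permutes {..<length ys}" "permute_list p ys = rev (sort ys)"
    by (rule mset_eq_permutation)
  show ?thesis
  proof (rule that[OF p(1)])
    fix k assume "k < length ys"
    thus "rev (sort ys) ! k = ys ! p k" by (simp flip: p(2) add: permute_list_nth[OF p(1)])
  qed
qed

lemma top_sum_eq_sum_nth: "top_sum xs n = (\<Sum>k<min n (length xs). rev (sort xs) ! k)"
  by (simp add: top_sum_def sum_list_sum_nth atLeast0LessThan min.commute)

lemma sum_subset_le_top_sum:
  fixes ys :: "real list"
  assumes T: "T \<subseteq> {..<length ys}"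
  shows "(\<Sum>i\<in>T. ys ! i) \<le> top_sum ys (card T)"
proof -
  obtain p where p: "p permutes {..<length ys}" "\<And>k. k < length ys \<Longrightarrow> rev (sort ys) ! k = ys ! p k"
    by (rule rev_sort_permutation[of ys]) blast
  define q where "q = inv_into UNIV p"
  have q: "q permutes {..<length ys}" unfolding q_def by (rule permutes_inv[OF p(1)])
  have inj: "inj_on q T" using permutes_inj[OF q] by (rule inj_on_subset) simp
  have qT: "q ` T \<subseteq> {..<length ys}" using T permutes_image[OF q] by auto
  have "(\<Sum>i\<in>T. ys ! i) = (\<Sum>i\<in>T. rev (sort ys) ! q i)"
    using T qT p(2) by (intro sum.cong refl) (auto simp: q_def permutes_inverses(1)[OF p(1)])
  also have "\<dots> = (\<Sum>k\<in>q ` T. rev (sort ys) ! k)" by (simp add: sum.reindex[OF inj])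
  also have "\<dots> \<le> (\<Sum>k<card T. rev (sort ys) ! k)"
    using sum_le_sum_prefix_if_descending[of "rev (sort ys)" "q ` T"] qT
    by (simp add: card_image[OF inj] rev_nth sorted_nth_mono)
  also have "\<dots> = top_sum ys (card T)"
    using card_mono[OF _ T] by (simp add: top_sum_eq_sum_nth min_absorb1)
  finally show ?thesis .
qed

lemma top_sum_eq_sum_subset:
  fixes xs :: "real list"
  obtains S where "S \<subseteq> {..<length xs}" "card S = min n (length xs)" "top_sum xs n = (\<Sum>i\<in>S. xs ! i)"
proof -
  obtain p where p: "p permutes {..<length xs}" "\<And>k. k < length xs \<Longrightarrow> rev (sort xs) ! k = xs ! p k"
    by (rule rev_sort_permutation[of xs]) blast
  define m where "m = min n (length xs)"
  have inj: "inj_on p {..<m}" using permutes_inj[OF p(1)] by (rule inj_on_subset) simp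
  show ?thesis
  proof (rule that)
    show "p ` {..<m} \<subseteq> {..<length xs}" using permutes_image[OF p(1)] by (auto simp: m_def)
    show "card (p ` {..<m}) = min n (length xs)" using card_image[OF inj] by (simp add: m_def)
    have "top_sum xs n = (\<Sum>k<m. xs ! p k)" by (simp add: top_sum_eq_sum_nth m_def p(2))
    thus "top_sum xs n = (\<Sum>i\<in>p ` {..<m}. xs ! i)" by (simp add: sum.reindex[OF inj])
  qed
qed

lemma majorized_if_subset_sums_le:
  assumes len: "length ys \<le> length xs" and sum: "sum_list xs = sum_list ys"
    and sub: "\<And>S. S \<subseteq> {..<length xs} \<Longrightarrow> (\<Sum>i\<in>S. xs ! i) \<le> sum_list (take (card S) ys)"
  shows "xs \<prec> ys"
proof -
  define m where "m = length xs"
  define ys' where "ys' = pad m ys"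
  have len': "length ys' = m" using len by (simp add: ys'_def pad_def m_def)
  have "top_sum xs n \<le> top_sum ys' n" for n
  proof -
    obtain S where S: "S \<subseteq> {..<m}" "card S = min n m" "top_sum xs n = (\<Sum>i\<in>S. xs ! i)"
      using top_sum_eq_sum_subset unfolding m_def by blast
    have "(\<Sum>i\<in>S. xs ! i) \<le> sum_list (take (card S) ys)" using S(1) sub by (simp add: m_def)
    also have "\<dots> = sum_list (take (card S) ys')"
      by (simp add: ys'_def pad_def take_append sum_list_replicate)
    also have "\<dots> = (\<Sum>i\<in>{..<card S}. ys' ! i)"
      using S(2) len' by (simp add: sum_list_sum_nth atLeast0LessThan)
    also have "\<dots> \<le> top_sum ys' (card S)"
      using sum_subset_le_top_sum[of "{..<card S}" ys'] S(2) len' by simp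
    also have "\<dots> = top_sum ys' n" using S(2) len' by (simp add: top_sum_eq_sum_nth)
    finally show ?thesis using S(3) by simp
  qed
  moreover have "pad m xs = xs" by (simp add: pad_def m_def)
  ultimately show ?thesis
    using len sum unfolding majorized_def Let_def ys'_def m_def by (simp add: max_absorb1)
qed

lemma sum_nth_append_split:
  assumes "S \<subseteq> {..<length xs + length ys}"
  shows "(\<Sum>i\<in>S. (xs @ ys) ! i)
           = (\<Sum>i\<in>S \<inter> {..<length xs}. xs ! i) + (\<Sum>j\<in>{j. length xs + j \<in> S}. ys ! j)"
    and "card S = card (S \<inter> {..<length xs}) + card {j. length xs + j \<in> S}"
proof -
  define n where "n = length xs"
  have fin: "finite S" using assms finite_subset by blast
  have split: "S = (S \<inter> {..<n}) \<union> (S - {..<n})" "(S \<inter> {..<n}) \<inter> (S - {..<n}) = {}" by auto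
  have bij: "bij_betw (\<lambda>j. n + j) {j. n + j \<in> S} (S - {..<n})"
    by (rule bij_betwI[where g = "\<lambda>i. i - n"]) auto
  have "(\<Sum>i\<in>S. (xs @ ys) ! i) = (\<Sum>i\<in>S \<inter> {..<n}. xs ! i) + (\<Sum>i\<in>S - {..<n}. ys ! (i - n))"
    using fin by (subst split(1), subst sum.union_disjoint) (auto simp: nth_append n_def)
  also have "(\<Sum>i\<in>S - {..<n}. ys ! (i - n)) = (\<Sum>j\<in>{j. n + j \<in> S}. ys ! j)"
    using sum.reindex_bij_betw[OF bij, of "\<lambda>i. ys ! (i - n)"] by simp
  finally show "(\<Sum>i\<in>S. (xs @ ys) ! i)
      = (\<Sum>i\<in>S \<inter> {..<length xs}. xs ! i) + (\<Sum>j\<in>{j. length xs + j \<in> S}. ys ! j)"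
    by (simp add: n_def)
  have "card S = card (S \<inter> {..<n}) + card (S - {..<n})"
    using fin by (subst split(1), subst card_Un_disjoint) auto
  thus "card S = card (S \<inter> {..<length xs}) + card {j. length xs + j \<in> S}"
    using bij_betw_same_card[OF bij] by (simp add: n_def)
qed

lemma sum_list_take_increments:
  fixes f :: "nat \<Rightarrow> real"
  assumes "1 \<le> d" "2 \<le> n"
  shows "sum_list (take n ([1, f 1] @ map (\<lambda>k. f k - f (k - 1)) [2..<d + 1])) = 1 + f (min (n - 1) d)"
proof -
  define xs where "xs = [1, f 1] @ map (\<lambda>k. f k - f (k - 1)) [2..<d + 1]"
  have len: "length xs = d + 1" using assms(1) by (simp add: xs_def del: upt_Suc)
  have prefix: "sum_list (take (k + 2) xs) = 1 + f (min (k + 1) d)" for k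
  proof (induction k)
    case 0
    show ?case using assms(1) by (simp add: xs_def)
  next
    case (Suc k)
    show ?case
    proof (cases "k + 2 < d + 1")
      case True
      have "[2..<d + 1] ! k = k + 2" using True by (simp del: upt_Suc)
      hence "xs ! (k + 2) = f (k + 2) - f (k + 1)"
        using True by (simp add: xs_def nth_append del: upt_Suc)
      hence "sum_list (take (Suc k + 2) xs) = sum_list (take (k + 2) xs) + (f (k + 2) - f (k + 1))"
        using True len by (simp add: take_Suc_conv_app_nth)
      thus ?thesis using Suc.IH True by simp
    next
      case False
      thus ?thesis using Suc.IH len by simp
    qed
  qed
  have n: "n - 2 + 2 = n" "n - 2 + 1 = n - 1" using assms(2) by simp_all
  show ?thesis unfolding xs_def[symmetric] using prefix[of "n - 2"] by (simp only: n)
qed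

locale two_bases_state =
  fixes d :: nat and a b U \<rho> :: "nat \<Rightarrow> nat \<Rightarrow> complex"
  assumes basis_a: "orthonormal_basis d a" and basis_b: "orthonormal_basis d b"
    and unitary: "unitary_mat d U" and overlaps: "\<forall>i<d. \<forall>j<d. U i j = cinner d (a i) (b j)"
    and state: "density_matrix d \<rho>"
begin

definition prob_a :: "nat \<Rightarrow> real" where "prob_a i = Re (quad_form d \<rho> (a i))"

definition prob_b :: "nat \<Rightarrow> real" where "prob_b j = Re (quad_form d \<rho> (b j))"

definition probs :: "real list" where "probs = map prob_a [0..<d] @ map prob_b [0..<d]"

definition majorant :: "real list" where
  "majorant = [1, s_val d U 1] @ map (\<lambda>k. s_val d U k - s_val d U (k - 1)) [2..<d + 1]"

lemma dim_pos: "1 \<le> d"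
  using state by (cases d) (simp_all add: density_matrix_def)

lemma length_majorant: "length majorant = d + 1"
  using dim_pos by (simp add: majorant_def del: upt_Suc)

lemma sum_list_take_majorant: "2 \<le> n \<Longrightarrow> sum_list (take n majorant) = 1 + s_val d U (min (n - 1) d)"
  unfolding majorant_def by (rule sum_list_take_increments[OF dim_pos])

lemma sum_list_majorant: "sum_list majorant = 2"
proof -
  have "take (d + 1) majorant = majorant" by (simp add: length_majorant)
  thus ?thesis
    using sum_list_take_majorant[of "d + 1"] dim_pos s_val_dim[OF unitary dim_pos] by simp
qed

lemma sum_list_probs: "sum_list probs = 2"
  using sum_basis_probabilities[OF basis_a state] sum_basis_probabilities[OF basis_b state]
  by (simp add: probs_def prob_a_def prob_b_def interv_sum_list_conv_sum_set_nat atLeast0LessThan)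

lemma sum_probs_le_1:
  assumes "I \<subseteq> {..<d}" "J \<subseteq> {..<d}" "I = {} \<or> J = {}"
  shows "(\<Sum>i\<in>I. prob_a i) + (\<Sum>j\<in>J. prob_b j) \<le> 1"
  using assms sum_basis_probabilities_le_1[OF basis_a state assms(1)]
    sum_basis_probabilities_le_1[OF basis_b state assms(2)]
  by (auto simp: prob_a_def prob_b_def)

lemma sum_probs_le_1_plus_s_val:
  assumes I: "I \<subseteq> {..<d}" and J: "J \<subseteq> {..<d}" and card: "2 \<le> card I + card J"
  shows "(\<Sum>i\<in>I. prob_a i) + (\<Sum>j\<in>J. prob_b j) \<le> 1 + s_val d U (min (card I + card J - 1) d)"
proof -
  define k where "k = min (card I + card J - 1) d"
  have k: "1 \<le> k" "k \<le> d" using card dim_pos by (auto simp: k_def)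
  show ?thesis
  proof (cases "I = {} \<or> J = {}")
    case True
    thus ?thesis using sum_probs_le_1[OF I J] s_val_nonneg[OF unitary k] by (simp add: k_def)
  next
    case False
    have "submat_norm U I J \<le> s_val d U k"
    proof (cases "card I + card J - 1 \<le> d")
      case True
      thus ?thesis using False card I J by (intro submat_norm_le_s_val) (auto simp: k_def)
    next
      case False
      thus ?thesis
        using submat_norm_le_1[OF unitary I J] \<open>\<not> (I = {} \<or> J = {})\<close> s_val_dim[OF unitary dim_pos]
        by (simp add: k_def)
    qed
    thus ?thesis
      using sum_basis_probabilities_le_submat_norm[OF basis_a basis_b unitary overlaps state I J] False
      by (simp add: prob_a_def prob_b_def k_def)
  qed
qed

lemma subset_sum_probs_le_prefix:
  assumes S: "S \<subseteq> {..<length probs}"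
  shows "(\<Sum>i\<in>S. probs ! i) \<le> sum_list (take (card S) majorant)"
proof -
  define I where "I = S \<inter> {..<d}"
  define J where "J = {j. d + j \<in> S}"
  have IJ: "I \<subseteq> {..<d}" "J \<subseteq> {..<d}" using S by (auto simp: I_def J_def probs_def)
  have S': "S \<subseteq> {..<length (map prob_a [0..<d]) + length (map prob_b [0..<d])}"
    using S by (simp add: probs_def)
  have sum: "(\<Sum>i\<in>S. probs ! i) = (\<Sum>i\<in>I. prob_a i) + (\<Sum>j\<in>J. prob_b j)"
    unfolding probs_def sum_nth_append_split(1)[OF S'] using IJ
    by (auto simp: I_def J_def intro!: sum.cong)
  have card: "card S = card I + card J"
    using sum_nth_append_split(2)[OF S'] by (simp add: I_def J_def)
  consider "card S = 0" | "card S = 1" | "2 \<le> card S" by linarith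
  thus ?thesis
  proof cases
    case 1
    hence "S = {}" using finite_subset[OF S] by simp
    thus ?thesis by simp
  next
    case 2
    hence "card I = 0 \<or> card J = 0" using card by linarith
    hence "I = {} \<or> J = {}" using finite_subset[OF IJ(1)] finite_subset[OF IJ(2)] by auto
    thus ?thesis using 2 sum sum_probs_le_1[OF IJ] by (simp add: majorant_def)
  next
    case 3
    thus ?thesis using sum sum_probs_le_1_plus_s_val[OF IJ] sum_list_take_majorant[OF 3] card by simp
  qed
qed

lemma probs_majorized: "probs \<prec> majorant"
  using length_majorant dim_pos sum_list_probs sum_list_majorant subset_sum_probs_le_prefix
  by (intro majorized_if_subset_sums_le) (simp_all add: probs_def)

end

theorem lemma1:
  fixes d :: nat and a b :: "nat \<Rightarrow> nat \<Rightarrow> complex"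
    and U \<rho> :: "nat \<Rightarrow> nat \<Rightarrow> complex" and p q :: "nat \<Rightarrow> real"
  assumes "orthonormal_basis d a" and "orthonormal_basis d b"
    and "unitary_mat d U"
    and "\<forall>i<d. \<forall>j<d. U i j = cinner d (a i) (b j)"
    and "density_matrix d \<rho>"
    and "\<forall>i<d. p i = Re (cinner d (a i) (mat_vec d \<rho> (a i)))"
    and "\<forall>j<d. q j = Re (cinner d (b j) (mat_vec d \<rho> (b j)))"
  shows "map p [0..<d] @ map q [0..<d] \<prec>
           [1, s_val d U 1] @ map (\<lambda>k. s_val d U k - s_val d U (k - 1)) [2..<d+1]"
proof -
  interpret two_bases_state d a b U \<rho> by unfold_locales (fact assms)+
  have "map p [0..<d] @ map q [0..<d] = probs"
    using assms(6,7) by (simp add: probs_def prob_a_def prob_b_def quad_form_def)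
  thus ?thesis using probs_majorized by (simp add: majorant_def)
qed

end
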